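(* Let $t$ be a positive integer, $r$ a positive integer and $g\in\{0,1\}$. Let $$A_{r,g}(z)=\sum_{m=0}^{r}\binom{r-g+\frac14}{m}\binom{2r-g-m}{r-g}(-z)^m,\qquad B_{r,g}(z)=\sum_{m=0}^{r-g}\binom{r-\frac14}{m}\binom{2r-g-m}{r}(-z)^m,$$ and define the binary forms $A^*_{r,g}(X,Y)=X^{r}A_{r,g}(Y/X)$ and $B^*_{r,g}(X,Y)=X^{r-g}B_{r,g}(Y/X)$. For integers $x,y$ put $\Xi(x,y)=4(1+\sqrt{-t})(x-\sqrt{-t}\,y)^4$ and $H(x,y)=4(\sqrt{-t}-1)(x+\sqrt{-t}\,y)^4$. Then for every pair of integers $(x,y)$, both $A^*_{r,g}\big(\Xi(x,y),\,\Xi(x,y)-H(x,y)\big)$ and $B^*_{r,g}\big(\Xi(x,y),\,\Xi(x,y)-H(x,y)\big)$ are algebraic integers in $\mathbb{Q}(\sqrt{-t})$.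
   Context: For real $a$ and a nonnegative integer $m$, $\binom{a}{m}=a(a-1)\cdots(a-m+1)/m!$. The degrees of $A_{r,g}$ and $B_{r,g}$ are $r$ and $r-g$ respectively. $\Xi$ and $H$ are the fourth powers $\xi^4,\eta^4$ of the resolvent forms; one has $\Xi-H=8P(x,y)$ with $P(x,y)=x^{4}+4tx^{3}y-6tx^{2}y^{2}-4t^{2}xy^{3}+t^{2}y^{4}$. *)

theory Defs
  imports Complex_Main "HOL-Computational_Algebra.Polynomial"
begin

definition sqrtm :: "nat \<Rightarrow> complex" where
  "sqrtm t = \<i> * complex_of_real (sqrt (real t))"

definition in_Qsqrtm :: "nat \<Rightarrow> complex \<Rightarrow> bool" where
  "in_Qsqrtm t z \<longleftrightarrow> (\<exists>a b. a \<in> \<rat> \<and> b \<in> \<rat> \<and>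
      z = complex_of_real a + complex_of_real b * sqrtm t)"

text \<open>Homogenised forms A*_{r,g}(X,Y) = X^r A_{r,g}(Y/X) and B*_{r,g}(X,Y) = X^(r-g) B_{r,g}(Y/X),
  written out as polynomials in X, Y.\<close>
definition Astar :: "nat \<Rightarrow> nat \<Rightarrow> complex \<Rightarrow> complex \<Rightarrow> complex" where
  "Astar r g X Y = (\<Sum>m=0..r.
     complex_of_real ((real r - real g + 1/4) gchoose m) *
     of_nat ((2*r - g - m) choose (r - g)) * (- Y) ^ m * X ^ (r - m))"

definition Bstar :: "nat \<Rightarrow> nat \<Rightarrow> complex \<Rightarrow> complex \<Rightarrow> complex" where
  "Bstar r g X Y = (\<Sum>m=0..r-g.
     complex_of_real ((real r - 1/4) gchoose m) *
     of_nat ((2*r - g - m) choose r) * (- Y) ^ m * X ^ (r - g - m))"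

definition Xi :: "nat \<Rightarrow> int \<Rightarrow> int \<Rightarrow> complex" where
  "Xi t x y = 4 * (1 + sqrtm t) * (of_int x - sqrtm t * of_int y) ^ 4"

definition Eta :: "nat \<Rightarrow> int \<Rightarrow> int \<Rightarrow> complex" where
  "Eta t x y = 4 * (sqrtm t - 1) * (of_int x + sqrtm t * of_int y) ^ 4"

end

theory Submission
  imports Defs "HOL-Computational_Algebra.Formal_Power_Series"
begin

unbundle fps_syntax

text \<open>Since \<open>\<Xi> - H = 8 P\<close> with \<open>P\<close> an integer and \<open>\<Xi>\<close> lies in \<open>\<int>[\<surd>-t]\<close>, the \<open>m\<close>-th term of
  either form is an integer multiple of \<open>8\<^sup>m (a gchoose m)\<close> times an element of \<open>\<int>[\<surd>-t]\<close>,
  where \<open>a \<in> \<nat> + 1/4\<close> or \<open>a \<in> \<nat> + 3/4\<close>. It therefore suffices that \<open>(1 + 8z)\<^sup>a\<close> has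
  integer coefficients for these \<open>a\<close>. This property is additive in \<open>a\<close> and holds for
  natural \<open>a\<close>, so everything reduces to \<open>a = 1/4\<close>: writing \<open>(1 + 8z)\<^sup>1\<^sup>/\<^sup>4 = 1 + 2w\<close>, the
  equation \<open>(1 + 2w)\<^sup>4 = 1 + 8z\<close> becomes \<open>w = z - 3w\<^sup>2 - 4w\<^sup>3 - 2w\<^sup>4\<close>, which determines the
  coefficients of \<open>w\<close> recursively as integers.\<close>

definition binomial_8_integral :: "real \<Rightarrow> bool" where
  "binomial_8_integral a \<longleftrightarrow> (\<forall>n. 8 ^ n * (a gchoose n) \<in> \<int>)"

lemma binomial_8_integral_of_nat: "binomial_8_integral (of_nat k)"
  by (simp add: binomial_8_integral_def flip: binomial_gbinomial)

lemma binomial_8_integral_add: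
  assumes "binomial_8_integral a" and "binomial_8_integral b"
  shows "binomial_8_integral (a + b)"
  unfolding binomial_8_integral_def
proof
  fix n
  have "8 ^ n * ((a + b) gchoose n) = (\<Sum>k=0..n. (8 ^ k * (a gchoose k)) * (8 ^ (n - k) * (b gchoose (n - k))))"
    unfolding gbinomial_Vandermonde[symmetric] sum_distrib_left
    by (intro sum.cong refl) (simp add: algebra_simps flip: power_add)
  also have "\<dots> \<in> \<int>"
    using assms unfolding binomial_8_integral_def by (blast intro: Ints_mult)
  finally show "8 ^ n * ((a + b) gchoose n) \<in> \<int>" .
qed

lemma fps_power_nth_Ints_below:
  fixes W :: "'a :: comm_ring_1 fps"
  assumes "\<forall>i<m. W $ i \<in> \<int>" and "n < m"
  shows "(W ^ k) $ n \<in> \<int>"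
  using assms(2)
proof (induction k arbitrary: n)
  case 0
  then show ?case by (simp add: fps_one_nth)
next
  case (Suc k)
  then show ?case
    using assms(1) by (auto simp: fps_mult_nth intro!: Ints_sum Ints_mult)
qed

lemma fps_power_nth_Ints_at:
  fixes W :: "'a :: idom fps"
  assumes W0: "W $ 0 = 0" and below: "\<forall>i<m. W $ i \<in> \<int>" and "2 \<le> k"
  shows "(W ^ k) $ m \<in> \<int>"
proof -
  obtain j where k: "k = Suc j" and "j \<ge> 1" using \<open>2 \<le> k\<close> by (cases k) auto
  have "(W ^ k) $ m = (\<Sum>i=0..m. W $ i * (W ^ j) $ (m - i))"
    by (simp add: k fps_mult_nth)
  also have "\<dots> \<in> \<int>"
  proof (rule Ints_sum)
    fix i assume "i \<in> {0..m}"
    then consider "i = 0" | "i = m" | "0 < i" "i < m" by fastforce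
    then show "W $ i * (W ^ j) $ (m - i) \<in> \<int>"
    proof cases
      case 3
      then show ?thesis
        using below fps_power_nth_Ints_below[OF below] by (intro Ints_mult) auto
    qed (use W0 \<open>j \<ge> 1\<close> in \<open>auto simp: fps_nth_power_0 zero_power\<close>)
  qed
  finally show ?thesis .
qed

lemma fps_fourth_root_nth_Ints:
  fixes W :: "'a :: {idom, ring_char_0} fps"
  assumes root: "(1 + 2 * W) ^ 4 = 1 + 8 * fps_X" and W0: "W $ 0 = 0"
  shows "W $ n \<in> \<int>"
proof (induction n rule: less_induct)
  case (less m)
  then have below: "\<forall>i<m. W $ i \<in> \<int>" by blast
  have "8 * W = 8 * (fps_X - 3 * W ^ 2 - 4 * W ^ 3 - 2 * W ^ 4)"
  proof -
    have "8 * W - 8 * (fps_X - 3 * W ^ 2 - 4 * W ^ 3 - 2 * W ^ 4) = (1 + 2 * W) ^ 4 - (1 + 8 * fps_X)"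
      by (simp add: algebra_simps power2_eq_square power3_eq_cube power4_eq_xxxx)
    then show ?thesis using root by simp
  qed
  then have recursion: "W = fps_X - 3 * W ^ 2 - 4 * W ^ 3 - 2 * W ^ 4"
    by (subst (asm) mult_cancel_left) (simp add: numeral_fps_const)
  have "W $ m = fps_X $ m - 3 * (W ^ 2) $ m - 4 * (W ^ 3) $ m - 2 * (W ^ 4) $ m"
    by (subst recursion) (simp add: numeral_fps_const)
  also have "\<dots> \<in> \<int>"
    using fps_power_nth_Ints_at[OF W0 below] by (intro Ints_diff Ints_mult) (auto simp: fps_X_nth)
  finally show ?case .
qed

lemma binomial_8_integral_quarter: "binomial_8_integral (1/4)"
proof -
  define C :: "real fps" where "C = fps_binomial (1/4) oo (fps_const 8 * fps_X)"
  define W :: "real fps" where "W = Abs_fps (\<lambda>n. if n = 0 then 0 else C $ n / 2)"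
  have C_nth: "C $ n = 8 ^ n * (1/4 gchoose n)" for n
    by (simp add: C_def)
  have "C ^ 4 = fps_binomial (1/4) ^ 4 oo (fps_const 8 * fps_X)"
    unfolding C_def by (simp add: fps_compose_power)
  also have "\<dots> = 1 + 8 * fps_X"
    by (simp add: fps_binomial_power fps_binomial_1 fps_compose_add_distrib numeral_fps_const)
  finally have C4: "C ^ 4 = 1 + 8 * fps_X" .
  have "C = 1 + 2 * W"
    by (rule fps_ext) (auto simp: W_def C_nth numeral_fps_const)
  then have "W $ n \<in> \<int>" for n
    using C4 by (intro fps_fourth_root_nth_Ints) (auto simp: W_def)
  then have "C $ n \<in> \<int>" for n
    using \<open>C = 1 + 2 * W\<close> by (cases "n = 0") (auto simp: numeral_fps_const)
  then show ?thesis
    by (simp add: binomial_8_integral_def C_nth)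
qed

lemma binomial_8_integral_quarters:
  "binomial_8_integral (of_nat k + 1/4)" "binomial_8_integral (of_nat k + 3/4)"
proof -
  have "binomial_8_integral (of_nat k + (1/4 + 1/4 + 1/4))"
    by (intro binomial_8_integral_add binomial_8_integral_of_nat binomial_8_integral_quarter)
  then show "binomial_8_integral (of_nat k + 3/4)" by simp
qed (intro binomial_8_integral_add binomial_8_integral_of_nat binomial_8_integral_quarter)

definition Ints_sqrtm :: "nat \<Rightarrow> complex set" where
  "Ints_sqrtm t = {of_int a + of_int b * sqrtm t | a b. True}"

lemma sqrtm_squared: "sqrtm t ^ 2 = - of_nat t"
proof -
  have "complex_of_real (sqrt (real t)) ^ 2 = of_nat t"
    by (simp flip: of_real_power)
  then show ?thesis by (simp add: sqrtm_def power_mult_distrib)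
qed

lemma Ints_sqrtm_of_int [intro]: "of_int k \<in> Ints_sqrtm t"
  unfolding Ints_sqrtm_def by (force intro: exI[of _ 0])

lemma Ints_sqrtm_numeral [intro]: "numeral k \<in> Ints_sqrtm t"
  using Ints_sqrtm_of_int[of "numeral k"] by simp

lemma Ints_sqrtm_one [intro]: "1 \<in> Ints_sqrtm t"
  using Ints_sqrtm_of_int[of 1] by simp

lemma Ints_sqrtm_sqrtm [intro]: "sqrtm t \<in> Ints_sqrtm t"
  unfolding Ints_sqrtm_def by (force intro: exI[of _ 0] exI[of _ 1])

lemma Ints_sqrtm_add [intro]:
  assumes "z \<in> Ints_sqrtm t" and "w \<in> Ints_sqrtm t"
  shows "z + w \<in> Ints_sqrtm t"
proof -
  obtain a b c d where "z = of_int a + of_int b * sqrtm t" and "w = of_int c + of_int d * sqrtm t"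
    using assms by (auto simp: Ints_sqrtm_def)
  then have "z + w = of_int (a + c) + of_int (b + d) * sqrtm t"
    by (simp add: algebra_simps)
  then show ?thesis unfolding Ints_sqrtm_def by blast
qed

lemma Ints_sqrtm_mult [intro]:
  assumes "z \<in> Ints_sqrtm t" and "w \<in> Ints_sqrtm t"
  shows "z * w \<in> Ints_sqrtm t"
proof -
  obtain a b c d where "z = of_int a + of_int b * sqrtm t" and "w = of_int c + of_int d * sqrtm t"
    using assms by (auto simp: Ints_sqrtm_def)
  then have "z * w = of_int (a * c - b * d * int t) + of_int (a * d + b * c) * sqrtm t"
    using sqrtm_squared[of t] by simp algebra
  then show ?thesis unfolding Ints_sqrtm_def by blast
qed

lemma Ints_sqrtm_uminus [intro]: "z \<in> Ints_sqrtm t \<Longrightarrow> - z \<in> Ints_sqrtm t"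
  using Ints_sqrtm_mult[OF Ints_sqrtm_of_int[of "-1"]] by simp

lemma Ints_sqrtm_diff [intro]: "z \<in> Ints_sqrtm t \<Longrightarrow> w \<in> Ints_sqrtm t \<Longrightarrow> z - w \<in> Ints_sqrtm t"
  using Ints_sqrtm_add[of z t "- w"] by auto

lemma Ints_sqrtm_power [intro]: "z \<in> Ints_sqrtm t \<Longrightarrow> z ^ n \<in> Ints_sqrtm t"
  by (induction n) auto

lemma Ints_sqrtm_sum [intro]: "(\<And>i. i \<in> A \<Longrightarrow> f i \<in> Ints_sqrtm t) \<Longrightarrow> sum f A \<in> Ints_sqrtm t"
  using Ints_sqrtm_of_int[of 0] by (induction A rule: infinite_finite_induct) auto

lemma algebraic_int_Ints_sqrtm:
  assumes "z \<in> Ints_sqrtm t"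
  shows "algebraic_int z"
proof -
  obtain a b where z: "z = of_int a + of_int b * sqrtm t"
    using assms by (auto simp: Ints_sqrtm_def)
  let ?p = "[:of_int (a ^ 2 + b ^ 2 * int t), of_int (- 2 * a), 1:] :: complex poly"
  show ?thesis
  proof (rule algebraic_int.intros[of ?p])
    show "\<forall>i. coeff ?p i \<in> \<int>"
      by (auto simp: coeff_pCons split: nat.splits)
    show "poly ?p z = 0"
      using sqrtm_squared[of t] by (simp add: z) algebra
  qed simp
qed

lemma in_Qsqrtm_Ints_sqrtm: "z \<in> Ints_sqrtm t \<Longrightarrow> in_Qsqrtm t z"
  unfolding Ints_sqrtm_def in_Qsqrtm_def by (force intro: Rats_of_int)

definition quartic_form_P :: "nat \<Rightarrow> int \<Rightarrow> int \<Rightarrow> int" where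
  "quartic_form_P t x y = x ^ 4 + 4 * t * x ^ 3 * y - 6 * t * x ^ 2 * y ^ 2 - 4 * t ^ 2 * x * y ^ 3 + t ^ 2 * y ^ 4"

lemma Xi_minus_Eta: "Xi t x y - Eta t x y = 8 * of_int (quartic_form_P t x y)"
proof -
  have "Xi t x y - Eta t x y - 8 * of_int (quartic_form_P t x y) = 0"
    using sqrtm_squared[of t] unfolding Xi_def Eta_def quartic_form_P_def
    by simp algebra
  then show ?thesis by simp
qed

lemma Xi_in_Ints_sqrtm: "Xi t x y \<in> Ints_sqrtm t"
  unfolding Xi_def by (intro Ints_sqrtm_mult Ints_sqrtm_add Ints_sqrtm_diff Ints_sqrtm_power
      Ints_sqrtm_numeral Ints_sqrtm_one Ints_sqrtm_sqrtm Ints_sqrtm_of_int)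

lemma gbinomial_term_in_Ints_sqrtm:
  assumes "binomial_8_integral a" and "w \<in> Ints_sqrtm t" and "z \<in> Ints_sqrtm t"
  shows "complex_of_real (a gchoose m) * of_nat c * (- (8 * w)) ^ m * z ^ k \<in> Ints_sqrtm t"
proof -
  obtain n where n: "8 ^ m * (a gchoose m) = of_int n"
    using assms(1) by (auto simp: binomial_8_integral_def elim!: Ints_cases)
  have "complex_of_real (a gchoose m) * (- (8 * w)) ^ m = complex_of_real (8 ^ m * (a gchoose m)) * (- w) ^ m"
    by (simp flip: power_mult_distrib)
  then have "complex_of_real (a gchoose m) * of_nat c * (- (8 * w)) ^ m * z ^ k
      = of_int n * (- w) ^ m * of_int (int c) * z ^ k"
    unfolding n by (simp add: ac_simps)
  also have "\<dots> \<in> Ints_sqrtm t"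
    using assms(2,3) by blast
  finally show ?thesis .
qed

theorem lemma5p1:
  fixes t r g :: nat and x y :: int
  assumes "t > 0" and "r > 0" and "g \<in> {0, 1}"
  shows "algebraic_int (Astar r g (Xi t x y) (Xi t x y - Eta t x y)) \<and>
         in_Qsqrtm t (Astar r g (Xi t x y) (Xi t x y - Eta t x y)) \<and>
         algebraic_int (Bstar r g (Xi t x y) (Xi t x y - Eta t x y)) \<and>
         in_Qsqrtm t (Bstar r g (Xi t x y) (Xi t x y - Eta t x y))"
proof -
  have A_exponent: "real r - real g + 1/4 = of_nat (r - g) + 1/4"
    and B_exponent: "real r - 1/4 = of_nat (r - 1) + 3/4"
    using assms(2,3) by auto
  have "Astar r g (Xi t x y) (Xi t x y - Eta t x y) \<in> Ints_sqrtm t"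
    unfolding Astar_def Xi_minus_Eta A_exponent
    by (intro Ints_sqrtm_sum gbinomial_term_in_Ints_sqrtm binomial_8_integral_quarters
        Xi_in_Ints_sqrtm Ints_sqrtm_of_int)
  moreover have "Bstar r g (Xi t x y) (Xi t x y - Eta t x y) \<in> Ints_sqrtm t"
    unfolding Bstar_def Xi_minus_Eta B_exponent
    by (intro Ints_sqrtm_sum gbinomial_term_in_Ints_sqrtm binomial_8_integral_quarters
        Xi_in_Ints_sqrtm Ints_sqrtm_of_int)
  ultimately show ?thesis
    using algebraic_int_Ints_sqrtm in_Qsqrtm_Ints_sqrtm by blast
qed

end
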